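(* Let $G$ be a graph with vertex set $[n]$ and let $P$ be a monomial in $\mathcal E_G$. Then $P$ is simple if and only if $P$ has no repeated variables and $\operatorname{supp}(P)$ has no cycles. Moreover, if $P$ is simple, then $\Pi(P)$ is the set partition of $[n]$ given by the cycles of $\sigma_P$.
   Context: The Fomin–Kirillov algebra $\mathcal E_n$ is the quadratic $\mathbf Q$-algebra with generators $x_{ij}=-x_{ji}$ for distinct $i,j\in[n]$, subject to the relations: $x_{ij}^2=0$ for distinct $i,j$; $x_{ij}x_{kl}=x_{kl}x_{ij}$ for distinct $i,j,k,l$; and $x_{ij}x_{jk}+x_{jk}x_{ki}+x_{ki}x_{ij}=0$ for distinct $i,j,k$. For a graph $G$ on vertex set $[n]$, $\mathcal E_G$ is the subalgebra of $\mathcal E_n$ generated by the $x_{ij}$ with $\overline{ij}$ an edge of $G$. A monomial is a product $P=x_{i_1j_1}\cdots x_{i_dj_d}$ of generators (with edges in $G$); its degree is $d(P)=d$; its $S_n$-degree is $\sigma_P=(i_1\;j_1)\cdots(i_d\;j_d)\in S_n$; $\operatorname{supp}(P)$ is the subgraph of $G$ (on vertex set $[n]$) whose edges are the $\overline{ij}$ with $x_{ij}$ appearing in $P$; and $\Pi(P)$ is the set partition of $[n]$ into the vertex sets of the connected components of $\operatorname{supp}(P)$. A monomial $P$ is called simple if $\sigma_P$ has exactly $n-d(P)$ cycles (counting fixed points). *)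

theory Defs
  imports "HOL-Combinatorics.Combinatorics"
begin

definition is_graph :: "nat \<Rightarrow> nat set set \<Rightarrow> bool" where
  "is_graph n G \<longleftrightarrow> (\<forall>e\<in>G. \<exists>i j. e = {i, j} \<and> i \<noteq> j \<and> i \<in> {1..n} \<and> j \<in> {1..n})"

text \<open>A monomial x_{i1 j1} ... x_{id jd} in E_G, recorded as the word of its index pairs.\<close>
definition is_monomial :: "nat \<Rightarrow> nat set set \<Rightarrow> (nat \<times> nat) list \<Rightarrow> bool" where
  "is_monomial n G P \<longleftrightarrow> (\<forall>(i, j)\<in>set P. i \<noteq> j \<and> i \<in> {1..n} \<and> j \<in> {1..n} \<and> {i, j} \<in> G)"

definition mdeg :: "(nat \<times> nat) list \<Rightarrow> nat" where
  "mdeg P = length P"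

definition sigma :: "(nat \<times> nat) list \<Rightarrow> nat \<Rightarrow> nat" where
  "sigma P = foldr (\<lambda>(i, j) f. transpose i j \<circ> f) P id"

definition perm_cycles :: "nat \<Rightarrow> (nat \<Rightarrow> nat) \<Rightarrow> nat set set" where
  "perm_cycles n s = (\<lambda>x. {y \<in> {1..n}. \<exists>k. (s ^^ k) x = y}) ` {1..n}"

definition simple_monomial :: "nat \<Rightarrow> (nat \<times> nat) list \<Rightarrow> bool" where
  "simple_monomial n P \<longleftrightarrow> int (card (perm_cycles n (sigma P))) = int n - int (mdeg P)"

definition no_repeated_vars :: "(nat \<times> nat) list \<Rightarrow> bool" where
  "no_repeated_vars P \<longleftrightarrow> distinct (map (\<lambda>(i, j). {i, j}) P)"

definition supp :: "(nat \<times> nat) list \<Rightarrow> nat set set" where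
  "supp P = (\<lambda>(i, j). {i, j}) ` set P"

definition has_cycle :: "nat set set \<Rightarrow> bool" where
  "has_cycle E \<longleftrightarrow> (\<exists>vs. length vs \<ge> 3 \<and> distinct vs \<and>
      (\<forall>k < length vs - 1. {vs ! k, vs ! Suc k} \<in> E) \<and> {last vs, hd vs} \<in> E)"

definition comp_partition :: "nat \<Rightarrow> nat set set \<Rightarrow> nat set set" where
  "comp_partition n E = (\<lambda>x. {y \<in> {1..n}. (x, y) \<in> ({(a, b). {a, b} \<in> E})\<^sup>*}) ` {1..n}"

definition Pi_part :: "nat \<Rightarrow> (nat \<times> nat) list \<Rightarrow> nat set set" where
  "Pi_part n P = comp_partition n (supp P)"

end

(*
  Let c(P) be the number of connected components of supp(P) on [n]. Adding the variables of P
  one at a time, each new edge either joins two components or lies inside one, so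
  c(P) \<ge> n - d(P), with equality iff every variable joins two components of the support of the
  variables after it; this is exactly "no repeated variables and supp(P) has no cycle".
  Since sigma_P moves points only along edges of supp(P), every cycle of sigma_P lies in a
  component, so sigma_P has at least c(P) cycles. Multiplying by a transposition (i j) with i and j
  in different cycles merges these two cycles, so when every variable joins two components the
  cycles of sigma_P are exactly the components. Hence P is simple iff c(P) = n - d(P), and then
  Pi(P) is the cycle partition of sigma_P.
*)

theory Submission
  imports Defs "HOL-Library.Transitive_Closure_Table"
begin

section \<open>Orbits of products of transpositions\<close>

lemma sigma_Nil [simp]: "sigma [] = id"
  by (simp add: sigma_def)

lemma sigma_Cons [simp]: "sigma ((i, j) # P) = transpose i j \<circ> sigma P"
  by (simp add: sigma_def)

lemma sigma_permutes:
  assumes "\<forall>(i, j) \<in> set P. i \<in> V \<and> j \<in> V"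
  shows "sigma P permutes V"
  using assms
proof (induction P)
  case (Cons p P)
  then obtain i j where "p = (i, j)" "i \<in> V" "j \<in> V" "sigma P permutes V"
    by (cases p) auto
  then show ?case by (metis sigma_Cons permutes_compose permutes_swap_id)
qed simp

lemma permutation_sigma: "permutation (sigma P)"
proof (induction P)
  case (Cons p P)
  obtain i j where "p = (i, j)" by fastforce
  then show ?case
    using Cons.IH by (simp only: sigma_Cons) (intro permutation_compose permutation_swap_id)
qed simp

lemma perm_cycles_eq_orbits:
  assumes "s permutes {1..n}"
  shows "perm_cycles n s = orbit s ` {1..n}"
proof -
  have perm: "permutation s"
    using assms permutation_permutes by blast
  have "{y \<in> {1..n}. \<exists>k. (s ^^ k) x = y} = orbit s x" if "x \<in> {1..n}" for x
    using permutes_orbit_subset[OF assms that] orbit_altdef_permutation[OF perm, of x]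
    by auto
  then show ?thesis
    unfolding perm_cycles_def by (auto simp: image_def)
qed

lemma orbit_eq_if_mem:
  assumes "permutation s" "y \<in> orbit s x"
  shows "orbit s y = orbit s x"
  by (metis assms cyclic_on_orbit' orbit_cyclic_eq3)

lemma rtrancl_of_orbit:
  assumes "\<And>x. (x, f x) \<in> R\<^sup>*" "y \<in> orbit f x"
  shows "(x, y) \<in> R\<^sup>*"
  using assms(2) by induction (use assms(1) in \<open>auto intro: rtrancl_trans\<close>)

lemma orbit_subset_orbit_transpose_comp:
  assumes s: "permutation s" and j: "j \<notin> orbit s i"
  shows "orbit s j \<subseteq> orbit (transpose i j \<circ> s) j \<and> i \<in> orbit (transpose i j \<circ> s) j"
proof -
  define t where "t = transpose i j \<circ> s"
  \<comment> \<open>t follows the s-orbit of j, except that the s-predecessor of j is sent to i\<close>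
  have t_eq: "t y = s y" if "y \<in> orbit s j" "s y \<noteq> j" for y
  proof -
    have "s y \<noteq> i"
      using orbit.step[OF that(1)] j orbit_eq_if_mem[OF s] permutation_self_in_orbit[OF s] by metis
    then show ?thesis using that(2) by (simp add: t_def transpose_def)
  qed
  have jj: "j \<in> orbit s j" by (rule permutation_self_in_orbit[OF s])
  have "y \<in> orbit t j" if "y \<in> orbit s j" "y \<noteq> j" for y
    using that
  proof induction
    case base
    then show ?case using t_eq[OF jj] by (metis orbit.base)
  next
    case (step y)
    then show ?case
      using t_eq[OF step.hyps] t_eq[OF jj] by (metis orbit.base orbit.step)
  qed
  moreover have "j \<in> orbit t j"
    unfolding t_def by (simp add: s permutation_compose permutation_swap_id permutation_self_in_orbit)
  ultimately have sub: "orbit s j \<subseteq> orbit t j" by blast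
  have "\<exists>y \<in> orbit s j. s y = j"
    using jj by (metis orbit.simps)
  then obtain y where y: "y \<in> orbit s j" "s y = j" ..
  then have "t y \<in> orbit t j" using sub by (blast intro: orbit.step)
  then show ?thesis using sub y(2) by (simp add: t_def)
qed

lemma orbit_transpose_comp:
  assumes s: "permutation s" and j: "j \<notin> orbit s i"
  shows "orbit (transpose i j \<circ> s) x =
    (if x \<in> orbit s i \<union> orbit s j then orbit s i \<union> orbit s j else orbit s x)"
proof -
  define t where "t = transpose i j \<circ> s"
  have t: "permutation t"
    unfolding t_def by (simp add: s permutation_compose permutation_swap_id)
  have self: "y \<in> orbit s y" for y
    by (rule permutation_self_in_orbit[OF s])
  have i: "i \<notin> orbit s j"
    using j self orbit_eq_if_mem[OF s] by metis
  have "orbit s j \<subseteq> orbit t j" "i \<in> orbit t j"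
    using orbit_subset_orbit_transpose_comp[OF s j] by (simp_all add: t_def)
  moreover have "orbit s i \<subseteq> orbit t i" "j \<in> orbit t i"
    using orbit_subset_orbit_transpose_comp[OF s i] by (simp_all add: t_def transpose_commute)
  moreover have "orbit t j \<subseteq> orbit s i \<union> orbit s j"
  proof
    fix y assume "y \<in> orbit t j"
    then show "y \<in> orbit s i \<union> orbit s j"
      by induction (use self in \<open>auto simp: t_def transpose_def intro: orbit.intros\<close>)
  qed
  ultimately have merged: "orbit t j = orbit s i \<union> orbit s j"
    using orbit_eq_if_mem[OF t] by blast
  show ?thesis
  proof (cases "x \<in> orbit s i \<union> orbit s j")
    case True
    then show ?thesis
      using merged orbit_eq_if_mem[OF t, of x j] by (simp add: t_def)
  next
    case False
    have "t y = s y" if "y \<in> orbit s x" for y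
    proof -
      have "orbit s (s y) = orbit s x"
        using orbit_eq_if_mem[OF s] orbit.step[OF that] by blast
      then have "s y \<noteq> i" "s y \<noteq> j"
        using False self by auto
      then show ?thesis by (simp add: t_def)
    qed
    then have "orbit t x = orbit s x"
      by (rule orbit_cong[OF self])
    then show ?thesis using False by (simp add: t_def)
  qed
qed

section \<open>Connected components\<close>

abbreviation adj :: "'a set set \<Rightarrow> ('a \<times> 'a) set" where
  "adj E \<equiv> {(a, b). {a, b} \<in> E}"

lemma rtrancl_adj_sym:
  assumes "(x, y) \<in> (adj E)\<^sup>*"
  shows "(y, x) \<in> (adj E)\<^sup>*"
proof -
  have "sym (adj E)"
    by (auto simp: sym_def insert_commute)
  then show ?thesis
    using sym_rtrancl assms unfolding sym_def by blast
qed

lemma rtrancl_adj_insert: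
  "(x, y) \<in> (adj (insert {i, j} E))\<^sup>* \<longleftrightarrow>
     (x, y) \<in> (adj E)\<^sup>* \<or> (x, i) \<in> (adj E)\<^sup>* \<and> (j, y) \<in> (adj E)\<^sup>*
       \<or> (x, j) \<in> (adj E)\<^sup>* \<and> (i, y) \<in> (adj E)\<^sup>*"
  (is "?L \<longleftrightarrow> ?R")
proof
  have "adj (insert {i, j} E) = adj E \<union> {(i, j), (j, i)}"
    by (auto simp: doubleton_eq_iff)
  moreover assume ?L
  ultimately have "(x, y) \<in> (adj E \<union> {(i, j), (j, i)})\<^sup>*" by simp
  then show ?R
    by induction (auto intro: rtrancl_into_rtrancl)
next
  have mono: "(adj E)\<^sup>* \<subseteq> (adj (insert {i, j} E))\<^sup>*"
    by (rule rtrancl_mono) blast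
  have "(i, j) \<in> (adj (insert {i, j} E))\<^sup>*" "(j, i) \<in> (adj (insert {i, j} E))\<^sup>*"
    by (auto simp: insert_commute)
  moreover assume ?R
  ultimately show ?L
    using mono by (meson rtrancl_trans subsetD)
qed

definition component :: "'a set \<Rightarrow> 'a set set \<Rightarrow> 'a \<Rightarrow> 'a set" where
  "component V E x = {y \<in> V. (x, y) \<in> (adj E)\<^sup>*}"

lemma comp_partition_eq: "comp_partition n E = component {1..n} E ` {1..n}"
  by (simp add: comp_partition_def component_def)

lemma self_in_component: "x \<in> V \<Longrightarrow> x \<in> component V E x"
  by (simp add: component_def)

lemma component_eq_if_mem:
  assumes "y \<in> component V E x"
  shows "component V E y = component V E x"
proof -
  have "(x, y) \<in> (adj E)\<^sup>*" "(y, x) \<in> (adj E)\<^sup>*"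
    using assms rtrancl_adj_sym by (auto simp: component_def)
  then show ?thesis
    unfolding component_def by (blast intro: rtrancl_trans)
qed

lemma component_empty: "x \<in> V \<Longrightarrow> component V {} x = {x}"
  by (auto simp: component_def)

lemma component_insert:
  assumes "i \<in> V" "j \<in> V" "x \<in> V"
  shows "component V (insert {i, j} E) x =
    (if x \<in> component V E i \<union> component V E j
     then component V E i \<union> component V E j else component V E x)"
  using assms unfolding component_def rtrancl_adj_insert
  by (auto dest: rtrancl_adj_sym intro: rtrancl_trans)

lemma component_image_insert:
  assumes "i \<in> V" "j \<in> V"
  shows "component V (insert {i, j} E) ` V =
    insert (component V E i \<union> component V E j)
      (component V E ` V - {component V E i, component V E j})"
    (is "_ = insert (?C i \<union> ?C j) (?C ` V - {?C i, ?C j})")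
proof (intro equalityI subsetI)
  fix X assume "X \<in> component V (insert {i, j} E) ` V"
  then obtain x where x: "x \<in> V" "X = component V (insert {i, j} E) x" by blast
  show "X \<in> insert (?C i \<union> ?C j) (?C ` V - {?C i, ?C j})"
  proof (cases "x \<in> ?C i \<union> ?C j")
    case True
    then show ?thesis using x component_insert[OF assms x(1)] by simp
  next
    case False
    then have "?C x \<noteq> ?C i" "?C x \<noteq> ?C j"
      using self_in_component[OF x(1)] by blast+
    then show ?thesis using x False component_insert[OF assms x(1)] by simp
  qed
next
  fix X assume X: "X \<in> insert (?C i \<union> ?C j) (?C ` V - {?C i, ?C j})"
  show "X \<in> component V (insert {i, j} E) ` V"
  proof (cases "X = ?C i \<union> ?C j")
    case True
    then have "X = component V (insert {i, j} E) i"
      using component_insert[OF assms assms(1)] self_in_component[OF assms(1)] by simp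
    then show ?thesis using assms(1) by blast
  next
    case False
    then obtain x where x: "x \<in> V" "X = ?C x" "?C x \<noteq> ?C i" "?C x \<noteq> ?C j"
      using X by blast
    then have "x \<notin> ?C i \<union> ?C j"
      using component_eq_if_mem[of x V E i] component_eq_if_mem[of x V E j] by auto
    then have "X = component V (insert {i, j} E) x"
      using x component_insert[OF assms x(1)] by simp
    then show ?thesis using x(1) by blast
  qed
qed

lemma component_image_insert_connected:
  assumes "i \<in> V" "j \<in> V" "(i, j) \<in> (adj E)\<^sup>*"
  shows "component V (insert {i, j} E) ` V = component V E ` V"
proof -
  have "component V E j = component V E i"
    using assms by (intro component_eq_if_mem) (simp add: component_def)
  then show ?thesis
    using component_image_insert[OF assms(1,2), of E] assms(1) by (simp add: insert_absorb)
qed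

lemma card_component_image_insert_disconnected:
  assumes "finite V" "i \<in> V" "j \<in> V" "(i, j) \<notin> (adj E)\<^sup>*"
  shows "card (component V (insert {i, j} E) ` V) + 1 = card (component V E ` V)"
proof -
  let ?C = "component V E"
  define D where "D = ?C ` V - {?C i, ?C j}"
  have ne: "?C i \<noteq> ?C j"
    using assms self_in_component[of j V E] by (auto simp: component_def)
  have new: "component V (insert {i, j} E) ` V = insert (?C i \<union> ?C j) D"
    and old: "?C ` V = insert (?C i) (insert (?C j) D)"
    using component_image_insert[OF assms(2,3), of E] assms(2,3) by (auto simp: D_def)
  have "?C i \<union> ?C j \<notin> D"
  proof
    assume "?C i \<union> ?C j \<in> D"
    then obtain x where "?C x = ?C i \<union> ?C j" by (auto simp: D_def)
    then have "i \<in> ?C x" "j \<in> ?C x"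
      by (simp_all add: self_in_component assms)
    then have "?C i = ?C x" "?C j = ?C x"
      by (simp_all add: component_eq_if_mem)
    then show False
      using ne by simp
  qed
  moreover have "finite D" "?C j \<notin> D" "?C i \<notin> insert (?C j) D"
    using assms(1) ne by (auto simp: D_def)
  ultimately show ?thesis
    unfolding new old by simp
qed

section \<open>Cycles of a graph\<close>

lemma rtrancl_adj_of_walk:
  assumes "\<forall>k < length vs - 1. {vs ! k, vs ! Suc k} \<in> E" "vs \<noteq> []"
  shows "(hd vs, last vs) \<in> (adj E)\<^sup>*"
proof -
  have "(vs ! 0, vs ! m) \<in> (adj E)\<^sup>*" if "m < length vs" for m
    using that
  proof (induction m)
    case (Suc m)
    then have "(vs ! m, vs ! Suc m) \<in> adj E"
      using assms(1) by simp
    then show ?case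
      using Suc by (auto intro: rtrancl_into_rtrancl)
  qed simp
  then show ?thesis
    using assms(2) by (simp add: hd_conv_nth last_conv_nth)
qed

lemma rtrancl_path_last_nth:
  assumes "rtrancl_path r x xs y"
  shows "last (x # xs) = y \<and> (\<forall>k < length xs. r ((x # xs) ! k) (xs ! k))"
  using assms by induction (auto simp: nth_Cons split: nat.split)

lemma distinct_walk_of_rtrancl_adj:
  assumes "(a, b) \<in> (adj E)\<^sup>*"
  obtains vs where "distinct vs" "vs \<noteq> []" "hd vs = a" "last vs = b"
    "\<forall>k < length vs - 1. {vs ! k, vs ! Suc k} \<in> E"
proof -
  have "(\<lambda>x y. {x, y} \<in> E)\<^sup>*\<^sup>* a b"
    using assms by (simp add: rtranclp_rtrancl_eq)
  then obtain xs where "rtrancl_path (\<lambda>x y. {x, y} \<in> E) a xs b"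
    unfolding rtranclp_eq_rtrancl_path by blast
  then obtain xs' where path: "rtrancl_path (\<lambda>x y. {x, y} \<in> E) a xs' b"
    and dist: "distinct (a # xs')"
    by (rule rtrancl_path_distinct)
  show thesis
  proof (rule that[OF dist])
    show "\<forall>k < length (a # xs') - 1. {(a # xs') ! k, (a # xs') ! Suc k} \<in> E"
      using rtrancl_path_last_nth[OF path] by simp
  qed (use rtrancl_path_last_nth[OF path] in simp_all)
qed

lemma non_bridge_of_has_cycle:
  assumes "has_cycle E"
  shows "\<exists>a b. a \<noteq> b \<and> {a, b} \<in> E \<and> (a, b) \<in> (adj (E - {{a, b}}))\<^sup>*"
proof -
  obtain vs where len: "3 \<le> length vs" and dist: "distinct vs"
    and walk: "\<forall>k < length vs - 1. {vs ! k, vs ! Suc k} \<in> E"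
    and closing: "{last vs, hd vs} \<in> E"
    using assms unfolding has_cycle_def by blast
  have ne: "vs \<noteq> []" using len by auto
  have ends: "hd vs = vs ! 0" "last vs = vs ! (length vs - 1)"
    using ne by (simp_all add: hd_conv_nth last_conv_nth)
  have "hd vs \<noteq> last vs"
    using ends ne len nth_eq_iff_index_eq[OF dist, of 0 "length vs - 1"] by simp
  moreover have "\<forall>k < length vs - 1. {vs ! k, vs ! Suc k} \<in> E - {{hd vs, last vs}}"
  proof (intro allI impI)
    fix k assume k: "k < length vs - 1"
    have "k < length vs" "Suc k < length vs" "0 < length vs" "length vs - 1 < length vs"
      using k by auto
    then have "{vs ! k, vs ! Suc k} \<noteq> {vs ! 0, vs ! (length vs - 1)}"
      using k len by (auto simp: doubleton_eq_iff nth_eq_iff_index_eq[OF dist])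
    then show "{vs ! k, vs ! Suc k} \<in> E - {{hd vs, last vs}}"
      using k walk ends by simp
  qed
  then have "(hd vs, last vs) \<in> (adj (E - {{hd vs, last vs}}))\<^sup>*"
    using ne by (rule rtrancl_adj_of_walk)
  moreover have "{hd vs, last vs} \<in> E"
    using closing by (simp add: insert_commute)
  ultimately show ?thesis
    by blast
qed

lemma has_cycle_of_non_bridge:
  assumes ab: "a \<noteq> b" "{a, b} \<in> E" and path: "(a, b) \<in> (adj (E - {{a, b}}))\<^sup>*"
  shows "has_cycle E"
proof -
  obtain vs where dist: "distinct vs" and ne: "vs \<noteq> []" and ends: "hd vs = a" "last vs = b"
    and walk: "\<forall>k < length vs - 1. {vs ! k, vs ! Suc k} \<in> E - {{a, b}}"
    using distinct_walk_of_rtrancl_adj[OF path] by blast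
  have ends': "vs ! 0 = a" "vs ! (length vs - 1) = b"
    using ne ends by (simp_all add: hd_conv_nth last_conv_nth)
  have "length vs \<noteq> 1"
    using ends' ab(1) by auto
  moreover have "length vs \<noteq> 2"
  proof
    assume two: "length vs = 2"
    then have "{vs ! 0, vs ! Suc 0} \<in> E - {{a, b}}"
      using walk by simp
    moreover have "vs ! Suc 0 = b"
      using ends'(2) two by simp
    ultimately show False
      using ends'(1) by simp
  qed
  moreover have "length vs \<noteq> 0"
    using ne by simp
  ultimately have "3 \<le> length vs"
    by linarith
  moreover have "{last vs, hd vs} \<in> E"
    using ab(2) ends by (simp add: insert_commute)
  ultimately show "has_cycle E"
    unfolding has_cycle_def using dist walk by blast
qed

lemma has_cycle_mono: "E \<subseteq> F \<Longrightarrow> has_cycle E \<Longrightarrow> has_cycle F"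
  unfolding has_cycle_def by blast

lemma rtrancl_adj_insert_remove:
  assumes "{a, b} \<in> E" "(a, b) \<in> (adj (insert {i, j} (E - {{a, b}})))\<^sup>*"
  shows "(a, b) \<in> (adj (E - {{a, b}}))\<^sup>* \<or> (i, j) \<in> (adj E)\<^sup>*"
proof -
  let ?E' = "E - {{a, b}}"
  have mono: "(adj ?E')\<^sup>* \<subseteq> (adj E)\<^sup>*"
    by (rule rtrancl_mono) blast
  consider "(a, b) \<in> (adj ?E')\<^sup>*"
    | "(a, i) \<in> (adj ?E')\<^sup>*" "(j, b) \<in> (adj ?E')\<^sup>*"
    | "(a, j) \<in> (adj ?E')\<^sup>*" "(i, b) \<in> (adj ?E')\<^sup>*"
    using assms(2) unfolding rtrancl_adj_insert by blast
  then show ?thesis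
  proof cases
    case 1
    then show ?thesis ..
  next
    case 2
    have ai: "(a, i) \<in> (adj E)\<^sup>*" and jb: "(j, b) \<in> (adj E)\<^sup>*"
      using 2 mono by auto
    have "(a, b) \<in> adj E"
      using assms(1) by simp
    with rtrancl_adj_sym[OF ai] rtrancl_adj_sym[OF jb] have "(i, j) \<in> (adj E)\<^sup>*"
      by (meson rtrancl_into_rtrancl rtrancl_trans)
    then show ?thesis ..
  next
    case 3
    have "(i, b) \<in> (adj E)\<^sup>*" "(a, j) \<in> (adj E)\<^sup>*"
      using 3 mono by auto
    moreover have "(b, a) \<in> adj E"
      using assms(1) by (simp add: insert_commute)
    ultimately have "(i, j) \<in> (adj E)\<^sup>*"
      by (meson rtrancl_into_rtrancl rtrancl_trans)
    then show ?thesis ..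
  qed
qed

lemma has_cycle_insert:
  assumes "i \<noteq> j" "{i, j} \<notin> E"
  shows "has_cycle (insert {i, j} E) \<longleftrightarrow> has_cycle E \<or> (i, j) \<in> (adj E)\<^sup>*"
proof
  assume "has_cycle (insert {i, j} E)"
  then obtain a b where ab: "a \<noteq> b" "{a, b} \<in> insert {i, j} E"
    and path: "(a, b) \<in> (adj (insert {i, j} E - {{a, b}}))\<^sup>*"
    using non_bridge_of_has_cycle by blast
  show "has_cycle E \<or> (i, j) \<in> (adj E)\<^sup>*"
  proof (cases "{a, b} = {i, j}")
    case True
    then have "insert {i, j} E - {{a, b}} = E"
      using assms(2) by auto
    then have ab_path: "(a, b) \<in> (adj E)\<^sup>*"
      using path by simp
    from True consider "a = i" "b = j" | "a = j" "b = i"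
      by (auto simp: doubleton_eq_iff)
    then have "(i, j) \<in> (adj E)\<^sup>*"
      by cases (use ab_path rtrancl_adj_sym[OF ab_path] in simp_all)
    then show ?thesis ..
  next
    case False
    then have ab_E: "{a, b} \<in> E"
      using ab(2) by simp
    have "insert {i, j} E - {{a, b}} = insert {i, j} (E - {{a, b}})"
      using False by auto
    then have "(a, b) \<in> (adj (insert {i, j} (E - {{a, b}})))\<^sup>*"
      using path by (simp only:)
    then show ?thesis
      using rtrancl_adj_insert_remove[OF ab_E] has_cycle_of_non_bridge[OF ab(1) ab_E] by blast
  qed
next
  assume "has_cycle E \<or> (i, j) \<in> (adj E)\<^sup>*"
  then show "has_cycle (insert {i, j} E)"
  proof
    assume "has_cycle E"
    then show ?thesis
      by (rule has_cycle_mono[rotated]) blast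
  next
    assume "(i, j) \<in> (adj E)\<^sup>*"
    moreover have "insert {i, j} E - {{i, j}} = E"
      using assms(2) by auto
    ultimately have "(i, j) \<in> (adj (insert {i, j} E - {{i, j}}))\<^sup>*"
      by (simp only:)
    then show ?thesis
      by (rule has_cycle_of_non_bridge[OF assms(1) insertI1])
  qed
qed

section \<open>Components and cycles of a monomial\<close>

lemma supp_Nil [simp]: "supp [] = {}"
  by (simp add: supp_def)

lemma supp_Cons [simp]: "supp ((i, j) # P) = insert {i, j} (supp P)"
  by (simp add: supp_def)

fun forest_word :: "(nat \<times> nat) list \<Rightarrow> bool" where
  "forest_word [] \<longleftrightarrow> True"
| "forest_word ((i, j) # P) \<longleftrightarrow> forest_word P \<and> (i, j) \<notin> (adj (supp P))\<^sup>*"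

lemma card_components_supp:
  assumes "finite V" "\<forall>(i, j) \<in> set P. i \<in> V \<and> j \<in> V"
  shows "card V \<le> card (component V (supp P) ` V) + length P \<and>
    (card (component V (supp P) ` V) + length P = card V \<longleftrightarrow> forest_word P)"
  using assms(2)
proof (induction P)
  case Nil
  have "component V (supp []) ` V = (\<lambda>x. {x}) ` V"
    by (simp add: component_empty)
  then show ?case by (simp add: card_image)
next
  case (Cons p P)
  then obtain i j where p: "p = (i, j)" and ij: "i \<in> V" "j \<in> V"
    and IH: "card V \<le> card (component V (supp P) ` V) + length P \<and>
      (card (component V (supp P) ` V) + length P = card V \<longleftrightarrow> forest_word P)"
    by (cases p) auto
  define c where "c = card (component V (supp P) ` V)"
  define c' where "c' = card (component V (supp (p # P)) ` V)"
  have "c' = c \<and> \<not> forest_word (p # P) \<or> c' + 1 = c \<and> (forest_word (p # P) \<longleftrightarrow> forest_word P)"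
  proof (cases "(i, j) \<in> (adj (supp P))\<^sup>*")
    case True
    then show ?thesis
      using component_image_insert_connected[OF ij True] p by (simp add: c_def c'_def)
  next
    case False
    then show ?thesis
      using card_component_image_insert_disconnected[OF assms(1) ij False] p
      by (simp add: c_def c'_def)
  qed
  then show ?case
    using IH unfolding c_def[symmetric] c'_def[symmetric] by auto
qed

lemma rtrancl_adj_supp_sigma: "(x, sigma P x) \<in> (adj (supp P))\<^sup>*"
proof (induction P arbitrary: x)
  case (Cons p P)
  obtain i j where p: "p = (i, j)" by fastforce
  have "(adj (supp P))\<^sup>* \<subseteq> (adj (supp (p # P)))\<^sup>*"
    by (rule rtrancl_mono) (auto simp: p)
  moreover have "(sigma P x, transpose i j (sigma P x)) \<in> (adj (supp (p # P)))\<^sup>*"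
    by (auto simp: p transpose_def insert_commute)
  ultimately show ?case
    using Cons.IH[of x] p by (auto intro: rtrancl_trans)
qed simp

lemma orbit_sigma_subset_component:
  assumes "sigma P permutes V" "x \<in> V"
  shows "orbit (sigma P) x \<subseteq> component V (supp P) x"
  using permutes_orbit_subset[OF assms] rtrancl_of_orbit[OF rtrancl_adj_supp_sigma]
  unfolding component_def by blast

lemma card_components_le_card_orbits:
  assumes "finite V" "sigma P permutes V"
  shows "card (component V (supp P) ` V) \<le> card (orbit (sigma P) ` V)"
proof -
  let ?C = "component V (supp P)"
  define f where "f Y = \<Union> (?C ` Y)" for Y
  have "f (orbit (sigma P) x) = ?C x" if x: "x \<in> V" for x
    unfolding f_def
  proof (rule SUP_eq_const)
    show "orbit (sigma P) x \<noteq> {}"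
      using permutation_self_in_orbit[OF permutation_sigma, of x] by blast
    show "?C y = ?C x" if "y \<in> orbit (sigma P) x" for y
      using orbit_sigma_subset_component[OF assms(2) x] that by (intro component_eq_if_mem) blast
  qed
  then have "f ` orbit (sigma P) ` V = ?C ` V"
    unfolding image_image by (intro image_cong) auto
  then show ?thesis
    using card_image_le[OF finite_imageI[OF assms(1)], of f "orbit (sigma P)"] by simp
qed

lemma orbit_sigma_eq_component:
  assumes "\<forall>(i, j) \<in> set P. i \<in> V \<and> j \<in> V" "forest_word P" "x \<in> V"
  shows "orbit (sigma P) x = component V (supp P) x"
  using assms
proof (induction P arbitrary: x)
  case Nil
  then show ?case by (simp add: component_empty orbit_eq_singleton_iff)
next
  case (Cons p P)
  obtain i j where p: "p = (i, j)" by fastforce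
  have ij: "i \<in> V" "j \<in> V" and P: "\<forall>(i, j) \<in> set P. i \<in> V \<and> j \<in> V" "forest_word P"
    and disconnected: "(i, j) \<notin> (adj (supp P))\<^sup>*"
    using Cons.prems(1,2) by (simp_all add: p)
  have IH: "orbit (sigma P) y = component V (supp P) y" if "y \<in> V" for y
    using Cons.IH[OF P that] .
  have "j \<notin> component V (supp P) i"
    using disconnected by (simp add: component_def)
  then have "j \<notin> orbit (sigma P) i"
    using orbit_sigma_subset_component[OF sigma_permutes[OF P(1)] ij(1)] by blast
  then have "orbit (sigma (p # P)) x =
    (if x \<in> orbit (sigma P) i \<union> orbit (sigma P) j
     then orbit (sigma P) i \<union> orbit (sigma P) j else orbit (sigma P) x)"
    using orbit_transpose_comp[OF permutation_sigma] by (simp add: p)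
  also have "\<dots> = component V (supp (p # P)) x"
    using component_insert[OF ij Cons.prems(3)] IH ij Cons.prems(3) by (simp add: p)
  finally show ?case .
qed

lemma no_repeated_vars_Cons:
  "no_repeated_vars ((i, j) # P) \<longleftrightarrow> {i, j} \<notin> supp P \<and> no_repeated_vars P"
  by (auto simp: no_repeated_vars_def supp_def)

lemma forest_word_iff:
  assumes "\<forall>(i, j) \<in> set P. i \<noteq> j"
  shows "forest_word P \<longleftrightarrow> no_repeated_vars P \<and> \<not> has_cycle (supp P)"
  using assms
proof (induction P)
  case Nil
  then show ?case by (simp add: no_repeated_vars_def has_cycle_def)
next
  case (Cons p P)
  obtain i j where p: "p = (i, j)" by fastforce
  have ij: "i \<noteq> j" and IH: "forest_word P \<longleftrightarrow> no_repeated_vars P \<and> \<not> has_cycle (supp P)"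
    using Cons by (simp_all add: p)
  show ?case
  proof (cases "{i, j} \<in> supp P")
    case True
    then have "(i, j) \<in> (adj (supp P))\<^sup>*" by auto
    then show ?thesis
      using True by (simp add: p no_repeated_vars_Cons)
  next
    case False
    then show ?thesis
      using IH has_cycle_insert[OF ij False] by (auto simp: p no_repeated_vars_Cons)
  qed
qed

(* The graph G plays no role: only the entries of P matter. *)
theorem proposition2p4:
  fixes n :: nat and G :: "nat set set" and P :: "(nat \<times> nat) list"
  assumes "is_graph n G" and "is_monomial n G P"
  shows "(simple_monomial n P \<longleftrightarrow> no_repeated_vars P \<and> \<not> has_cycle (supp P))
         \<and> (simple_monomial n P \<longrightarrow> Pi_part n P = perm_cycles n (sigma P))"
proof -
  have entries: "\<forall>(i, j) \<in> set P. i \<in> {1..n} \<and> j \<in> {1..n}"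
    and loopless: "\<forall>(i, j) \<in> set P. i \<noteq> j"
    using assms(2) unfolding is_monomial_def by auto
  have perm: "sigma P permutes {1..n}"
    by (rule sigma_permutes[OF entries])
  have cycles: "perm_cycles n (sigma P) = orbit (sigma P) ` {1..n}"
    by (rule perm_cycles_eq_orbits[OF perm])
  have comps: "Pi_part n P = component {1..n} (supp P) ` {1..n}"
    by (simp add: Pi_part_def comp_partition_eq)
  have "card (Pi_part n P) \<le> card (perm_cycles n (sigma P))"
    using card_components_le_card_orbits[OF _ perm] cycles comps by simp
  moreover have "n \<le> card (Pi_part n P) + length P \<and>
      (card (Pi_part n P) + length P = n \<longleftrightarrow> forest_word P)"
    using card_components_supp[OF _ entries] comps by simp
  moreover have forest_eq: "Pi_part n P = perm_cycles n (sigma P)" if "forest_word P"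
    unfolding cycles comps using orbit_sigma_eq_component[OF entries that] by simp
  moreover have "simple_monomial n P \<longleftrightarrow> card (perm_cycles n (sigma P)) + length P = n"
    unfolding simple_monomial_def mdeg_def by linarith
  ultimately have "simple_monomial n P \<longleftrightarrow> forest_word P"
    by fastforce
  then show ?thesis
    using forest_word_iff[OF loopless] forest_eq by simp
qed

end
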